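(* Let $X\colon\mathcal K\leftarrow\mathcal H$ and $Y\colon\mathcal H\leftarrow\mathcal G$ be groupoid correspondences, and let $U\subseteq X$ and $V\subseteq Y$ be slices. Then $U\cdot V=\{[x,y]:x\in U,y\in V,s(x)=r(y)\}\subseteq X\circ_{\mathcal H}Y$ is a slice of $X\circ_{\mathcal H}Y$, and for each $z\in U\cdot V$ the elements $x\in U$, $y\in V$ with $z=[x,y]$ are unique.
   Context: Groupoids are étale ($r,s$ local homeomorphisms, continuous multiplication and inversion) with Hausdorff locally compact object space. A groupoid correspondence $X\colon\mathcal H\leftarrow\mathcal G$: space with commuting continuous left $\mathcal H$-action (anchor $r$) and right $\mathcal G$-action (anchor $s$), $s$ a local homeomorphism, right action free and proper. $X\circ_{\mathcal H}Y$ is the orbit space of $X\times_{s,\mathcal H^0,r}Y$ under $h\cdot(x,y)=(xh^{-1},hy)$, elements $[x,y]$, a groupoid correspondence $\mathcal K\leftarrow\mathcal G$ with $k[x,y]=[kx,y]$, $[x,y]g=[x,yg]$, $s[x,y]=s(y)$. A slice of a correspondence $X\colon\mathcal H\leftarrow\mathcal G$ is an open subset on which both $s\colon X\to\mathcal G^0$ and the orbit projection $X\to X/\mathcal G$ are injective. *)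

theory Defs
  imports "HOL-Analysis.Analysis"
begin

definition local_homeo :: "'a topology \<Rightarrow> 'b topology \<Rightarrow> ('a \<Rightarrow> 'b) \<Rightarrow> bool" where
  "local_homeo X Y f \<longleftrightarrow> continuous_map X Y f \<and>
     (\<forall>x \<in> topspace X. \<exists>U. openin X U \<and> x \<in> U \<and> openin Y (f ` U) \<and>
        homeomorphic_map (subtopology X U) (subtopology Y (f ` U)) f)"

definition quot_top :: "'a topology \<Rightarrow> ('a \<Rightarrow> 'b) \<Rightarrow> 'b topology" where
  "quot_top T f = topology (\<lambda>U. U \<subseteq> f ` topspace T \<and> openin T {x \<in> topspace T. f x \<in> U})"

text \<open>A groupoid is given by its arrow space (the topspace of gtop); the object
  space is identified with the set of units, i.e. the image of the range map.\<close>
record 'g grpd =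
  gtop :: "'g topology"
  rng  :: "'g \<Rightarrow> 'g"
  src  :: "'g \<Rightarrow> 'g"
  mult :: "'g \<Rightarrow> 'g \<Rightarrow> 'g"
  ginv :: "'g \<Rightarrow> 'g"

definition arr :: "('g, 'z) grpd_scheme \<Rightarrow> 'g set" where
  "arr G = topspace (gtop G)"

definition units :: "('g, 'z) grpd_scheme \<Rightarrow> 'g set" where
  "units G = rng G ` arr G"

definition unit_top :: "('g, 'z) grpd_scheme \<Rightarrow> 'g topology" where
  "unit_top G = subtopology (gtop G) (units G)"

definition composable :: "('g, 'z) grpd_scheme \<Rightarrow> ('g \<times> 'g) set" where
  "composable G = {(g, h). g \<in> arr G \<and> h \<in> arr G \<and> src G g = rng G h}"

definition etale_groupoid :: "('g, 'z) grpd_scheme \<Rightarrow> bool" where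
  "etale_groupoid G \<longleftrightarrow>
     (\<forall>g \<in> arr G. rng G g \<in> arr G \<and> src G g \<in> arr G \<and>
        rng G (rng G g) = rng G g \<and> src G (rng G g) = rng G g \<and>
        rng G (src G g) = src G g \<and> src G (src G g) = src G g) \<and>
     (\<forall>(g, h) \<in> composable G. mult G g h \<in> arr G \<and>
        rng G (mult G g h) = rng G g \<and> src G (mult G g h) = src G h) \<and>
     (\<forall>g h k. g \<in> arr G \<and> h \<in> arr G \<and> k \<in> arr G \<and> src G g = rng G h \<and> src G h = rng G k
        \<longrightarrow> mult G (mult G g h) k = mult G g (mult G h k)) \<and>
     (\<forall>g \<in> arr G. mult G (rng G g) g = g \<and> mult G g (src G g) = g) \<and>
     (\<forall>g \<in> arr G. ginv G g \<in> arr G \<and> rng G (ginv G g) = src G g \<and> src G (ginv G g) = rng G g \<and>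
        mult G g (ginv G g) = rng G g \<and> mult G (ginv G g) g = src G g) \<and>
     local_homeo (gtop G) (unit_top G) (rng G) \<and>
     local_homeo (gtop G) (unit_top G) (src G) \<and>
     continuous_map (subtopology (prod_topology (gtop G) (gtop G)) (composable G)) (gtop G)
        (\<lambda>(g, h). mult G g h) \<and>
     continuous_map (gtop G) (gtop G) (ginv G) \<and>
     Hausdorff_space (unit_top G) \<and> locally_compact_space (unit_top G)"

text \<open>A correspondence \<open>X : H \<leftarrow> G\<close>: space \<open>ctop\<close>, left \<open>H\<close>-action \<open>lact\<close> with anchor \<open>cr\<close>,
  right \<open>G\<close>-action \<open>ract\<close> with anchor \<open>cs\<close>.\<close>
record ('x, 'h, 'g) corr =
  ctop :: "'x topology"
  cr   :: "'x \<Rightarrow> 'h"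
  cs   :: "'x \<Rightarrow> 'g"
  lact :: "'h \<Rightarrow> 'x \<Rightarrow> 'x"
  ract :: "'x \<Rightarrow> 'g \<Rightarrow> 'x"

definition pts :: "('x, 'h, 'g) corr \<Rightarrow> 'x set" where
  "pts X = topspace (ctop X)"

definition is_corr :: "'h grpd \<Rightarrow> 'g grpd \<Rightarrow> ('x, 'h, 'g) corr \<Rightarrow> bool" where
  "is_corr H G X \<longleftrightarrow>
     continuous_map (ctop X) (unit_top H) (cr X) \<and>
     local_homeo (ctop X) (unit_top G) (cs X) \<and>
     \<comment> \<open>left action\<close>
     (\<forall>h x. h \<in> arr H \<and> x \<in> pts X \<and> src H h = cr X x \<longrightarrow>
        lact X h x \<in> pts X \<and> cr X (lact X h x) = rng H h \<and> cs X (lact X h x) = cs X x) \<and>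
     (\<forall>x \<in> pts X. lact X (cr X x) x = x) \<and>
     (\<forall>h1 h2 x. h1 \<in> arr H \<and> h2 \<in> arr H \<and> x \<in> pts X \<and> src H h1 = rng H h2 \<and> src H h2 = cr X x
        \<longrightarrow> lact X h1 (lact X h2 x) = lact X (mult H h1 h2) x) \<and>
     continuous_map
        (subtopology (prod_topology (gtop H) (ctop X)) {(h, x). h \<in> arr H \<and> x \<in> pts X \<and> src H h = cr X x})
        (ctop X) (\<lambda>(h, x). lact X h x) \<and>
     \<comment> \<open>right action\<close>
     (\<forall>x g. x \<in> pts X \<and> g \<in> arr G \<and> cs X x = rng G g \<longrightarrow>
        ract X x g \<in> pts X \<and> cs X (ract X x g) = src G g \<and> cr X (ract X x g) = cr X x) \<and>
     (\<forall>x \<in> pts X. ract X x (cs X x) = x) \<and>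
     (\<forall>x g1 g2. x \<in> pts X \<and> g1 \<in> arr G \<and> g2 \<in> arr G \<and> cs X x = rng G g1 \<and> src G g1 = rng G g2
        \<longrightarrow> ract X (ract X x g1) g2 = ract X x (mult G g1 g2)) \<and>
     continuous_map
        (subtopology (prod_topology (ctop X) (gtop G)) {(x, g). x \<in> pts X \<and> g \<in> arr G \<and> cs X x = rng G g})
        (ctop X) (\<lambda>(x, g). ract X x g) \<and>
     \<comment> \<open>the actions commute\<close>
     (\<forall>h x g. h \<in> arr H \<and> x \<in> pts X \<and> g \<in> arr G \<and> src H h = cr X x \<and> cs X x = rng G g
        \<longrightarrow> lact X h (ract X x g) = ract X (lact X h x) g) \<and>
     \<comment> \<open>the right action is free and proper\<close>
     (\<forall>x g. x \<in> pts X \<and> g \<in> arr G \<and> cs X x = rng G g \<and> ract X x g = x \<longrightarrow> g = cs X x) \<and>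
     proper_map
        (subtopology (prod_topology (ctop X) (gtop G)) {(x, g). x \<in> pts X \<and> g \<in> arr G \<and> cs X x = rng G g})
        (prod_topology (ctop X) (ctop X)) (\<lambda>(x, g). (x, ract X x g))"

text \<open>Orbit of a point under the right action (the orbit projection \<open>X \<rightarrow> X/G\<close>).\<close>
definition orbit_r :: "'g grpd \<Rightarrow> ('x, 'h, 'g) corr \<Rightarrow> 'x \<Rightarrow> 'x set" where
  "orbit_r G X x = {ract X x g | g. g \<in> arr G \<and> rng G g = cs X x}"

definition slice :: "'g grpd \<Rightarrow> ('x, 'h, 'g) corr \<Rightarrow> 'x set \<Rightarrow> bool" where
  "slice G X U \<longleftrightarrow> openin (ctop X) U \<and> inj_on (cs X) U \<and> inj_on (orbit_r G X) U"

definition fib_prod :: "('x, 'k, 'h) corr \<Rightarrow> ('y, 'h, 'g) corr \<Rightarrow> ('x \<times> 'y) set" where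
  "fib_prod X Y = {(x, y). x \<in> pts X \<and> y \<in> pts Y \<and> cs X x = cr Y y}"

text \<open>The class \<open>[x,y]\<close>: the \<open>H\<close>-orbit of \<open>(x,y)\<close> under \<open>h\<cdot>(x,y) = (x h\<^sup>-\<^sup>1, h y)\<close>.\<close>
definition cls :: "'h grpd \<Rightarrow> ('x, 'k, 'h) corr \<Rightarrow> ('y, 'h, 'g) corr \<Rightarrow> 'x \<Rightarrow> 'y \<Rightarrow> ('x \<times> 'y) set" where
  "cls H X Y x y = {(ract X x (ginv H h), lact Y h y) | h. h \<in> arr H \<and> src H h = cs X x}"

definition rep :: "('x \<times> 'y) set \<Rightarrow> 'x \<times> 'y" where
  "rep z = (SOME p. p \<in> z)"

text \<open>The composite correspondence \<open>X \<circ>\<^sub>H Y : K \<leftarrow> G\<close> (orbit space with quotient topology;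
  anchors and actions computed on representatives).\<close>
definition comp_corr :: "'h grpd \<Rightarrow> ('x, 'k, 'h) corr \<Rightarrow> ('y, 'h, 'g) corr \<Rightarrow> (('x \<times> 'y) set, 'k, 'g) corr" where
  "comp_corr H X Y =
     \<lparr> ctop = quot_top (subtopology (prod_topology (ctop X) (ctop Y)) (fib_prod X Y)) (\<lambda>(x, y). cls H X Y x y),
       cr = (\<lambda>z. cr X (fst (rep z))),
       cs = (\<lambda>z. cs Y (snd (rep z))),
       lact = (\<lambda>k z. cls H X Y (lact X k (fst (rep z))) (snd (rep z))),
       ract = (\<lambda>z g. cls H X Y (fst (rep z)) (ract Y (snd (rep z)) g)) \<rparr>"

definition slice_prod :: "'h grpd \<Rightarrow> ('x, 'k, 'h) corr \<Rightarrow> ('y, 'h, 'g) corr \<Rightarrow> 'x set \<Rightarrow> 'y set \<Rightarrow> ('x \<times> 'y) set set" where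
  "slice_prod H X Y U V = {cls H X Y x y | x y. x \<in> U \<and> y \<in> V \<and> cs X x = cr Y y}"

end

(*
  Representatives of a class [x, y] differ by the H-action (x h^-1, h y). If x and x' in U
  represent the same class, they lie in one H-orbit, so x' = x because U is a slice, and
  freeness of the right action makes h a unit; hence representatives in U x V are unique.
  Since s[x, y] = s(y) and the G-orbit of [x, y] consists of the classes [x, y g], injectivity
  of s and of the orbit map on U.V reduces to the same properties on U and V. For openness,
  a continuous local section of the range map of the etale groupoid H through h moves all
  points near (x h^-1, h y) in the fibre product, without changing their classes, to points
  near (x, y), i.e. into U x V.
*)

theory Submission
  imports Defs
begin

lemma openin_quot_top:
  "openin (quot_top T f) S \<longleftrightarrow> S \<subseteq> f ` topspace T \<and> openin T {p \<in> topspace T. f p \<in> S}"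
proof -
  have "istopology (\<lambda>S. S \<subseteq> f ` topspace T \<and> openin T {p \<in> topspace T. f p \<in> S})"
    unfolding istopology_def
  proof (rule conjI; intro allI impI)
    fix S S'
    assume "S \<subseteq> f ` topspace T \<and> openin T {p \<in> topspace T. f p \<in> S}"
      and "S' \<subseteq> f ` topspace T \<and> openin T {p \<in> topspace T. f p \<in> S'}"
    moreover have "{p \<in> topspace T. f p \<in> S \<inter> S'}
        = {p \<in> topspace T. f p \<in> S} \<inter> {p \<in> topspace T. f p \<in> S'}"
      by auto
    ultimately show "S \<inter> S' \<subseteq> f ` topspace T \<and> openin T {p \<in> topspace T. f p \<in> S \<inter> S'}"
      by auto
  next
    fix \<S>
    assume "\<forall>S \<in> \<S>. S \<subseteq> f ` topspace T \<and> openin T {p \<in> topspace T. f p \<in> S}"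
    moreover have "{p \<in> topspace T. f p \<in> \<Union>\<S>} = (\<Union>S \<in> \<S>. {p \<in> topspace T. f p \<in> S})"
      by auto
    ultimately show "\<Union>\<S> \<subseteq> f ` topspace T \<and> openin T {p \<in> topspace T. f p \<in> \<Union>\<S>}"
      by auto
  qed
  then show ?thesis
    by (simp add: quot_top_def)
qed

locale etale_grpd =
  fixes G :: "('g, 'z) grpd_scheme"
  assumes etale: "etale_groupoid G"
begin

lemma arr_rng_src [simp]:
  "g \<in> arr G \<Longrightarrow> rng G g \<in> arr G"
  "g \<in> arr G \<Longrightarrow> src G g \<in> arr G"
  "g \<in> arr G \<Longrightarrow> rng G (rng G g) = rng G g"
  "g \<in> arr G \<Longrightarrow> src G (rng G g) = rng G g"
  "g \<in> arr G \<Longrightarrow> rng G (src G g) = src G g"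
  "g \<in> arr G \<Longrightarrow> src G (src G g) = src G g"
  using etale by (simp_all add: etale_groupoid_def)

lemma mult_closed [simp]:
  assumes "g \<in> arr G" "h \<in> arr G" "src G g = rng G h"
  shows "mult G g h \<in> arr G" "rng G (mult G g h) = rng G g" "src G (mult G g h) = src G h"
  using etale assms by (auto simp: etale_groupoid_def composable_def)

lemma mult_assoc:
  "g \<in> arr G \<Longrightarrow> h \<in> arr G \<Longrightarrow> k \<in> arr G \<Longrightarrow> src G g = rng G h \<Longrightarrow> src G h = rng G k
   \<Longrightarrow> mult G (mult G g h) k = mult G g (mult G h k)"
  using etale by (simp add: etale_groupoid_def)

lemma mult_units [simp]:
  "g \<in> arr G \<Longrightarrow> mult G (rng G g) g = g"
  "g \<in> arr G \<Longrightarrow> mult G g (src G g) = g"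
  using etale by (simp_all add: etale_groupoid_def)

lemma ginv_simps [simp]:
  "g \<in> arr G \<Longrightarrow> ginv G g \<in> arr G"
  "g \<in> arr G \<Longrightarrow> rng G (ginv G g) = src G g"
  "g \<in> arr G \<Longrightarrow> src G (ginv G g) = rng G g"
  "g \<in> arr G \<Longrightarrow> mult G g (ginv G g) = rng G g"
  "g \<in> arr G \<Longrightarrow> mult G (ginv G g) g = src G g"
  using etale by (simp_all add: etale_groupoid_def)

lemma local_homeo_rng: "local_homeo (gtop G) (unit_top G) (rng G)"
  using etale by (simp add: etale_groupoid_def)

lemma continuous_map_ginv: "continuous_map (gtop G) (gtop G) (ginv G)"
  using etale by (simp add: etale_groupoid_def)

lemma ginv_unique:
  assumes "k \<in> arr G" "g \<in> arr G" "src G k = rng G g" "mult G k g = src G g"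
  shows "k = ginv G g"
proof -
  have "k = mult G k (mult G g (ginv G g))"
    using assms by (metis ginv_simps(4) mult_units(2))
  also have "\<dots> = ginv G g"
    using assms mult_assoc[of k g "ginv G g"] by (metis ginv_simps(1,2) mult_units(1))
  finally show ?thesis .
qed

lemma ginv_ginv [simp]: "g \<in> arr G \<Longrightarrow> ginv G (ginv G g) = g"
  by (metis ginv_simps ginv_unique)

lemma ginv_unit: "u \<in> arr G \<Longrightarrow> rng G u = u \<Longrightarrow> ginv G u = u"
  by (metis arr_rng_src(4) ginv_simps(1,2,4) ginv_unique mult_units(1))

lemma mult_ginv_cancel_left [simp]:
  "g \<in> arr G \<Longrightarrow> h \<in> arr G \<Longrightarrow> src G g = rng G h \<Longrightarrow> mult G (ginv G g) (mult G g h) = h"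
  by (simp flip: mult_assoc)

lemma ginv_mult:
  "g \<in> arr G \<Longrightarrow> h \<in> arr G \<Longrightarrow> src G g = rng G h
   \<Longrightarrow> ginv G (mult G g h) = mult G (ginv G h) (ginv G g)"
  by (rule ginv_unique[symmetric]) (simp_all add: mult_assoc)

lemma rng_local_section:
  assumes "g \<in> arr G"
  obtains N \<sigma> where "openin (unit_top G) N" "rng G g \<in> N"
    "continuous_map (subtopology (unit_top G) N) (gtop G) \<sigma>"
    "\<And>u. u \<in> N \<Longrightarrow> \<sigma> u \<in> arr G \<and> rng G (\<sigma> u) = u" "\<sigma> (rng G g) = g"
proof -
  obtain B where B: "openin (gtop G) B" "g \<in> B" "openin (unit_top G) (rng G ` B)"
    "homeomorphic_map (subtopology (gtop G) B) (subtopology (unit_top G) (rng G ` B)) (rng G)"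
    using local_homeo_rng assms unfolding local_homeo_def arr_def by blast
  then obtain \<sigma> where \<sigma>: "homeomorphic_maps (subtopology (gtop G) B)
      (subtopology (unit_top G) (rng G ` B)) (rng G) \<sigma>"
    using homeomorphic_map_maps by blast
  have B_arr: "B \<subseteq> arr G"
    using openin_subset[OF B(1)] by (simp add: arr_def)
  have top_B: "topspace (subtopology (gtop G) B) = B"
    using B_arr by (auto simp: arr_def)
  have top_rng_B: "topspace (subtopology (unit_top G) (rng G ` B)) = rng G ` B"
    using openin_subset[OF B(3)] by auto
  have cont: "continuous_map (subtopology (unit_top G) (rng G ` B)) (subtopology (gtop G) B) \<sigma>"
    and rng_\<sigma>: "\<And>u. u \<in> rng G ` B \<Longrightarrow> rng G (\<sigma> u) = u"
    and \<sigma>_rng: "\<And>h. h \<in> B \<Longrightarrow> \<sigma> (rng G h) = h"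
    using \<sigma> top_B top_rng_B unfolding homeomorphic_maps_def by auto
  have "\<sigma> u \<in> B" if "u \<in> rng G ` B" for u
    using continuous_map_image_subset_topspace[OF cont] that top_B top_rng_B by blast
  then show thesis
    using that[of "rng G ` B" \<sigma>] B(2,3) cont B_arr rng_\<sigma> \<sigma>_rng
    by (auto simp: continuous_map_in_subtopology)
qed

end

locale groupoid_corr = H: etale_grpd H + G: etale_grpd G
  for H :: "'h grpd" and G :: "'g grpd" +
  fixes X :: "('x, 'h, 'g) corr"
  assumes corr: "is_corr H G X"
begin

lemma continuous_map_cs: "continuous_map (ctop X) (unit_top G) (cs X)"
  using corr by (simp add: is_corr_def local_homeo_def)

lemma cs_unit [simp]:
  assumes "x \<in> pts X"
  shows "cs X x \<in> arr G" "rng G (cs X x) = cs X x" "src G (cs X x) = cs X x"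
proof -
  obtain g where "g \<in> arr G" "cs X x = rng G g"
    using continuous_map_image_subset_topspace[OF continuous_map_cs] assms
    by (auto simp: pts_def unit_top_def units_def arr_def)
  then show "cs X x \<in> arr G" "rng G (cs X x) = cs X x" "src G (cs X x) = cs X x"
    by simp_all
qed

lemma cr_unit [simp]:
  assumes "x \<in> pts X"
  shows "cr X x \<in> arr H" "rng H (cr X x) = cr X x" "src H (cr X x) = cr X x"
proof -
  have "continuous_map (ctop X) (unit_top H) (cr X)"
    using corr by (simp add: is_corr_def)
  then obtain h where "h \<in> arr H" "cr X x = rng H h"
    using continuous_map_image_subset_topspace assms
    by (fastforce simp: pts_def unit_top_def units_def arr_def)
  then show "cr X x \<in> arr H" "rng H (cr X x) = cr X x" "src H (cr X x) = cr X x"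
    by simp_all
qed

lemma lact_simps [simp]:
  assumes "h \<in> arr H" "x \<in> pts X" "src H h = cr X x"
  shows "lact X h x \<in> pts X" "cr X (lact X h x) = rng H h" "cs X (lact X h x) = cs X x"
  using corr assms by (simp_all add: is_corr_def)

lemma lact_cr [simp]: "x \<in> pts X \<Longrightarrow> lact X (cr X x) x = x"
  using corr by (simp add: is_corr_def)

lemma lact_lact:
  "h \<in> arr H \<Longrightarrow> k \<in> arr H \<Longrightarrow> x \<in> pts X \<Longrightarrow> src H h = rng H k \<Longrightarrow> src H k = cr X x
   \<Longrightarrow> lact X h (lact X k x) = lact X (mult H h k) x"
  using corr by (simp add: is_corr_def)

lemma ract_simps [simp]:
  assumes "x \<in> pts X" "g \<in> arr G" "cs X x = rng G g"
  shows "ract X x g \<in> pts X" "cs X (ract X x g) = src G g" "cr X (ract X x g) = cr X x"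
  using corr assms by (simp_all add: is_corr_def)

lemma ract_cs [simp]: "x \<in> pts X \<Longrightarrow> ract X x (cs X x) = x"
  using corr by (simp add: is_corr_def)

lemma ract_ract:
  "x \<in> pts X \<Longrightarrow> g \<in> arr G \<Longrightarrow> k \<in> arr G \<Longrightarrow> cs X x = rng G g \<Longrightarrow> src G g = rng G k
   \<Longrightarrow> ract X (ract X x g) k = ract X x (mult G g k)"
  using corr by (simp add: is_corr_def)

lemma lact_ract_commute:
  "h \<in> arr H \<Longrightarrow> x \<in> pts X \<Longrightarrow> g \<in> arr G \<Longrightarrow> src H h = cr X x \<Longrightarrow> cs X x = rng G g
   \<Longrightarrow> lact X h (ract X x g) = ract X (lact X h x) g"
  using corr by (simp add: is_corr_def)

lemma ract_free:
  "x \<in> pts X \<Longrightarrow> g \<in> arr G \<Longrightarrow> cs X x = rng G g \<Longrightarrow> ract X x g = x \<Longrightarrow> g = cs X x"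
  using corr by (simp add: is_corr_def)

lemma lact_ginv_lact [simp]:
  "h \<in> arr H \<Longrightarrow> x \<in> pts X \<Longrightarrow> src H h = cr X x \<Longrightarrow> lact X (ginv H h) (lact X h x) = x"
  by (simp add: lact_lact)

lemma ract_ract_ginv [simp]:
  "x \<in> pts X \<Longrightarrow> g \<in> arr G \<Longrightarrow> cs X x = rng G g \<Longrightarrow> ract X (ract X x g) (ginv G g) = x"
  using ract_ract[of x g "ginv G g"] ract_cs[of x] by simp

lemma orbit_r_ract:
  assumes "x \<in> pts X" "g \<in> arr G" "cs X x = rng G g"
  shows "orbit_r G X (ract X x g) = orbit_r G X x"
proof (intro equalityI subsetI)
  fix z assume "z \<in> orbit_r G X (ract X x g)"
  then obtain k where "k \<in> arr G" "rng G k = src G g" "z = ract X x (mult G g k)"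
    using assms by (auto simp: orbit_r_def ract_ract)
  then show "z \<in> orbit_r G X x"
    using assms unfolding orbit_r_def by (intro CollectI exI[of _ "mult G g k"]) simp
next
  fix z assume "z \<in> orbit_r G X x"
  then obtain k where k: "k \<in> arr G" "rng G k = cs X x" "z = ract X x k"
    by (auto simp: orbit_r_def)
  then have "z = ract X (ract X x g) (mult G (ginv G g) k)"
    using assms G.mult_units(1)[of k] by (simp add: ract_ract flip: G.mult_assoc)
  then show "z \<in> orbit_r G X (ract X x g)"
    using assms k unfolding orbit_r_def by (intro CollectI exI[of _ "mult G (ginv G g) k"]) simp
qed

lemma continuous_map_ract:
  assumes a: "continuous_map Z (ctop X) a" and k: "continuous_map Z (gtop G) k"
    and "\<And>z. z \<in> topspace Z \<Longrightarrow> cs X (a z) = rng G (k z)"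
  shows "continuous_map Z (ctop X) (\<lambda>z. ract X (a z) (k z))"
proof -
  have "(\<lambda>z. (a z, k z)) \<in> topspace Z \<rightarrow> {(x, g). x \<in> pts X \<and> g \<in> arr G \<and> cs X x = rng G g}"
    using assms continuous_map_image_subset_topspace[OF a] continuous_map_image_subset_topspace[OF k]
    by (auto simp: pts_def arr_def)
  with continuous_map_pairedI[OF a k]
  have "continuous_map Z (subtopology (prod_topology (ctop X) (gtop G))
      {(x, g). x \<in> pts X \<and> g \<in> arr G \<and> cs X x = rng G g}) (\<lambda>z. (a z, k z))"
    by (simp add: continuous_map_in_subtopology)
  moreover have "continuous_map (subtopology (prod_topology (ctop X) (gtop G))
      {(x, g). x \<in> pts X \<and> g \<in> arr G \<and> cs X x = rng G g}) (ctop X) (case_prod (ract X))"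
    using corr unfolding is_corr_def by (elim conjE) assumption
  ultimately have "continuous_map Z (ctop X) (case_prod (ract X) \<circ> (\<lambda>z. (a z, k z)))"
    by (rule continuous_map_compose)
  then show ?thesis
    by (simp add: comp_def)
qed

lemma continuous_map_lact:
  assumes k: "continuous_map Z (gtop H) k" and a: "continuous_map Z (ctop X) a"
    and "\<And>z. z \<in> topspace Z \<Longrightarrow> src H (k z) = cr X (a z)"
  shows "continuous_map Z (ctop X) (\<lambda>z. lact X (k z) (a z))"
proof -
  have "(\<lambda>z. (k z, a z)) \<in> topspace Z \<rightarrow> {(h, x). h \<in> arr H \<and> x \<in> pts X \<and> src H h = cr X x}"
    using assms continuous_map_image_subset_topspace[OF a] continuous_map_image_subset_topspace[OF k]
    by (auto simp: pts_def arr_def)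
  with continuous_map_pairedI[OF k a]
  have "continuous_map Z (subtopology (prod_topology (gtop H) (ctop X))
      {(h, x). h \<in> arr H \<and> x \<in> pts X \<and> src H h = cr X x}) (\<lambda>z. (k z, a z))"
    by (simp add: continuous_map_in_subtopology)
  moreover have "continuous_map (subtopology (prod_topology (gtop H) (ctop X))
      {(h, x). h \<in> arr H \<and> x \<in> pts X \<and> src H h = cr X x}) (ctop X) (case_prod (lact X))"
    using corr unfolding is_corr_def by (elim conjE) assumption
  ultimately have "continuous_map Z (ctop X) (case_prod (lact X) \<circ> (\<lambda>z. (k z, a z)))"
    by (rule continuous_map_compose)
  then show ?thesis
    by (simp add: comp_def)
qed

lemma local_arrow_lift:
  assumes "x \<in> pts X" "g \<in> arr G" "rng G g = cs X x"
  obtains N \<kappa> where "openin (ctop X) N" "x \<in> N"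
    "continuous_map (subtopology (ctop X) N) (gtop G) \<kappa>"
    "\<And>x'. x' \<in> N \<Longrightarrow> \<kappa> x' \<in> arr G \<and> rng G (\<kappa> x') = cs X x'" "\<kappa> x = g"
proof -
  obtain M \<sigma> where M: "openin (unit_top G) M" "rng G g \<in> M"
    and \<sigma>: "continuous_map (subtopology (unit_top G) M) (gtop G) \<sigma>"
    "\<And>u. u \<in> M \<Longrightarrow> \<sigma> u \<in> arr G \<and> rng G (\<sigma> u) = u" "\<sigma> (rng G g) = g"
    using G.rng_local_section[OF assms(2)] by blast
  define N where "N = {x' \<in> topspace (ctop X). cs X x' \<in> M}"
  have "openin (ctop X) N"
    unfolding N_def using continuous_map_cs M(1) by (rule openin_continuous_map_preimage)
  moreover have "continuous_map (subtopology (ctop X) N) (subtopology (unit_top G) M) (cs X)"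
    using continuous_map_cs by (auto simp: N_def continuous_map_in_subtopology continuous_map_from_subtopology)
  then have "continuous_map (subtopology (ctop X) N) (gtop G) (\<sigma> \<circ> cs X)"
    using \<sigma>(1) by (rule continuous_map_compose)
  ultimately show thesis
    using that[of N "\<sigma> \<circ> cs X"] assms M(2) \<sigma>(2,3) by (auto simp: N_def pts_def)
qed

end

lemma fib_prod_iff [simp]:
  "(x, y) \<in> fib_prod X Y \<longleftrightarrow> x \<in> pts X \<and> y \<in> pts Y \<and> cs X x = cr Y y"
  by (simp add: fib_prod_def)

lemma slice_subset_pts: "slice G X U \<Longrightarrow> U \<subseteq> pts X"
  by (auto simp: slice_def pts_def dest: openin_subset)

definition fib_top :: "('x, 'k, 'h) corr \<Rightarrow> ('y, 'h, 'g) corr \<Rightarrow> ('x \<times> 'y) topology" where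
  "fib_top X Y = subtopology (prod_topology (ctop X) (ctop Y)) (fib_prod X Y)"

lemma topspace_fib_top [simp]: "topspace (fib_top X Y) = fib_prod X Y"
  by (auto simp: fib_top_def fib_prod_def pts_def)

lemma continuous_map_fst_fib_top: "continuous_map (fib_top X Y) (ctop X) fst"
  unfolding fib_top_def by (intro continuous_map_from_subtopology continuous_map_fst)

lemma continuous_map_snd_fib_top: "continuous_map (fib_top X Y) (ctop Y) snd"
  unfolding fib_top_def by (intro continuous_map_from_subtopology continuous_map_snd)

lemma ctop_comp_corr: "ctop (comp_corr H X Y) = quot_top (fib_top X Y) (\<lambda>(x, y). cls H X Y x y)"
  by (simp add: comp_corr_def fib_top_def)

lemma slice_prodE:
  assumes "z \<in> slice_prod H X Y U V" "U \<subseteq> pts X" "V \<subseteq> pts Y"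
  obtains x y where "x \<in> U" "y \<in> V" "(x, y) \<in> fib_prod X Y" "z = cls H X Y x y"
  using assms unfolding slice_prod_def by auto

locale corr_comp = H: etale_grpd H + X: groupoid_corr K H X + Y: groupoid_corr H G Y
  for K :: "'k grpd" and H :: "'h grpd" and G :: "'g grpd"
    and X :: "('x, 'k, 'h) corr" and Y :: "('y, 'h, 'g) corr"
begin

lemma cls_self: "(x, y) \<in> fib_prod X Y \<Longrightarrow> (x, y) \<in> cls H X Y x y"
  using X.ract_cs[of x] H.ginv_unit[of "cr Y y"] unfolding cls_def
  by (intro CollectI exI[of _ "cr Y y"]) auto

lemma mem_clsE:
  assumes "(a, b) \<in> cls H X Y x y"
  obtains h where "h \<in> arr H" "src H h = cs X x" "a = ract X x (ginv H h)" "b = lact Y h y"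
  using assms unfolding cls_def by blast

lemma mem_cls_fib_prod: "(x, y) \<in> fib_prod X Y \<Longrightarrow> (a, b) \<in> cls H X Y x y \<Longrightarrow> (a, b) \<in> fib_prod X Y"
  by (erule mem_clsE) auto

lemma mem_cls_sym:
  assumes "(x, y) \<in> fib_prod X Y" "(a, b) \<in> cls H X Y x y"
  shows "(x, y) \<in> cls H X Y a b"
proof -
  obtain h where h: "h \<in> arr H" "src H h = cs X x" "a = ract X x (ginv H h)" "b = lact Y h y"
    using assms(2) by (rule mem_clsE)
  then show ?thesis
    using assms(1) X.ract_ract_ginv[of x "ginv H h"] unfolding cls_def
    by (intro CollectI exI[of _ "ginv H h"]) auto
qed

lemma cls_subset_if_mem:
  assumes "(x, y) \<in> fib_prod X Y" "(a, b) \<in> cls H X Y x y"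
  shows "cls H X Y a b \<subseteq> cls H X Y x y"
proof
  fix p assume "p \<in> cls H X Y a b"
  then obtain g where g: "g \<in> arr H" "src H g = cs X a" "p = (ract X a (ginv H g), lact Y g b)"
    unfolding cls_def by blast
  obtain h where h: "h \<in> arr H" "src H h = cs X x" "a = ract X x (ginv H h)" "b = lact Y h y"
    using assms(2) by (rule mem_clsE)
  have "p = (ract X x (ginv H (mult H g h)), lact Y (mult H g h) y)"
    using assms(1) g h by (simp add: X.ract_ract Y.lact_lact H.ginv_mult)
  then show "p \<in> cls H X Y x y"
    using assms(1) g h unfolding cls_def by (intro CollectI exI[of _ "mult H g h"]) simp
qed

lemma cls_eq_if_mem: "(x, y) \<in> fib_prod X Y \<Longrightarrow> (a, b) \<in> cls H X Y x y \<Longrightarrow> cls H X Y a b = cls H X Y x y"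
  by (meson cls_subset_if_mem mem_cls_sym mem_cls_fib_prod subset_antisym)

lemma ract_lact_mem_cls:
  assumes "(a, b) \<in> fib_prod X Y" "k \<in> arr H" "rng H k = cs X a"
  shows "(ract X a k, lact Y (ginv H k) b) \<in> cls H X Y a b"
  using assms unfolding cls_def by (intro CollectI exI[of _ "ginv H k"]) auto

lemma rep_cls: "(x, y) \<in> fib_prod X Y \<Longrightarrow> rep (cls H X Y x y) \<in> cls H X Y x y"
  unfolding rep_def by (rule someI) (rule cls_self)

lemma cs_comp_corr_cls:
  assumes "(x, y) \<in> fib_prod X Y"
  shows "cs (comp_corr H X Y) (cls H X Y x y) = cs Y y"
proof -
  obtain h where "h \<in> arr H" "src H h = cs X x" "snd (rep (cls H X Y x y)) = lact Y h y"
    using rep_cls[OF assms] by (metis mem_clsE prod.collapse)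
  then show ?thesis
    using assms by (simp add: comp_corr_def)
qed

lemma ract_comp_corr_cls:
  assumes "(x, y) \<in> fib_prod X Y" "g \<in> arr G" "rng G g = cs Y y"
  shows "ract (comp_corr H X Y) (cls H X Y x y) g = cls H X Y x (ract Y y g)"
proof -
  obtain a b where ab: "rep (cls H X Y x y) = (a, b)"
    by fastforce
  then obtain h where h: "h \<in> arr H" "src H h = cs X x" "a = ract X x (ginv H h)" "b = lact Y h y"
    using rep_cls[OF assms(1)] by (metis mem_clsE)
  then have "(a, ract Y b g) \<in> cls H X Y x (ract Y y g)"
    using assms unfolding cls_def
    by (intro CollectI exI[of _ h]) (simp add: Y.lact_ract_commute)
  with assms have "cls H X Y a (ract Y b g) = cls H X Y x (ract Y y g)"
    by (intro cls_eq_if_mem) auto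
  then show ?thesis
    using ab by (simp add: comp_corr_def)
qed

lemma orbit_r_comp_corr_cls:
  assumes "(x, y) \<in> fib_prod X Y"
  shows "orbit_r G (comp_corr H X Y) (cls H X Y x y)
    = {cls H X Y x (ract Y y g) | g. g \<in> arr G \<and> rng G g = cs Y y}"
  unfolding orbit_r_def cs_comp_corr_cls[OF assms] setcompr_eq_image
  using assms by (intro image_cong) (auto simp: ract_comp_corr_cls)

lemma slice_cls_eqD:
  assumes "inj_on (orbit_r H X) U" "x \<in> U" "x' \<in> U"
    and "(x, y) \<in> fib_prod X Y" "(x', y') \<in> fib_prod X Y" "cls H X Y x' y' = cls H X Y x y"
  shows "x' = x \<and> y' = y"
proof -
  obtain h where h: "h \<in> arr H" "src H h = cs X x" "x' = ract X x (ginv H h)" "y' = lact Y h y"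
    using cls_self[OF assms(5)] assms(6) by (metis mem_clsE)
  then have "orbit_r H X x' = orbit_r H X x"
    using assms(4) by (simp add: X.orbit_r_ract)
  then have "x' = x"
    using assms(1-3) by (meson inj_onD)
  then have "ginv H h = cs X x"
    using assms(4) h by (intro X.ract_free) auto
  then have "h = cr Y y"
    using assms(4) h(1) H.ginv_ginv[of h] H.ginv_unit[of "cr Y y"] by auto
  with \<open>x' = x\<close> show ?thesis
    using assms(4) h by simp
qed

lemma slice_prod_unique_rep:
  assumes "U \<subseteq> pts X" "V \<subseteq> pts Y" "inj_on (orbit_r H X) U" "z \<in> slice_prod H X Y U V"
  shows "\<exists>!(x, y). x \<in> U \<and> y \<in> V \<and> cs X x = cr Y y \<and> z = cls H X Y x y"
proof -
  obtain x y where xy: "x \<in> U" "y \<in> V" "(x, y) \<in> fib_prod X Y" "z = cls H X Y x y"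
    using assms(4,1,2) by (rule slice_prodE)
  show ?thesis
  proof (rule ex1I[of _ "(x, y)"])
    show "case (x, y) of (x, y) \<Rightarrow> x \<in> U \<and> y \<in> V \<and> cs X x = cr Y y \<and> z = cls H X Y x y"
      using xy by simp
  next
    fix p assume "case p of (x, y) \<Rightarrow> x \<in> U \<and> y \<in> V \<and> cs X x = cr Y y \<and> z = cls H X Y x y"
    then show "p = (x, y)"
      using slice_cls_eqD[OF assms(3) xy(1) _ xy(3)] xy(4) assms(1,2) by (cases p) auto
  qed
qed

lemma inj_on_cs_slice_prod:
  assumes "U \<subseteq> pts X" "V \<subseteq> pts Y" "inj_on (cs X) U" "inj_on (cs Y) V"
  shows "inj_on (cs (comp_corr H X Y)) (slice_prod H X Y U V)"
proof (rule inj_onI)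
  fix z1 z2
  assume z: "z1 \<in> slice_prod H X Y U V" "z2 \<in> slice_prod H X Y U V"
    and cs_eq: "cs (comp_corr H X Y) z1 = cs (comp_corr H X Y) z2"
  obtain x1 y1 where xy1: "x1 \<in> U" "y1 \<in> V" "(x1, y1) \<in> fib_prod X Y" "z1 = cls H X Y x1 y1"
    using z(1) assms(1,2) by (rule slice_prodE)
  obtain x2 y2 where xy2: "x2 \<in> U" "y2 \<in> V" "(x2, y2) \<in> fib_prod X Y" "z2 = cls H X Y x2 y2"
    using z(2) assms(1,2) by (rule slice_prodE)
  have "cs Y y1 = cs Y y2"
    using cs_eq xy1 xy2 by (simp add: cs_comp_corr_cls)
  then have "y1 = y2"
    using assms(4) xy1(2) xy2(2) by (meson inj_onD)
  then have "cs X x1 = cs X x2"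
    using xy1(3) xy2(3) by simp
  then have "x1 = x2"
    using assms(3) xy1(1) xy2(1) by (meson inj_onD)
  with \<open>y1 = y2\<close> show "z1 = z2"
    using xy1(4) xy2(4) by simp
qed

lemma inj_on_orbit_slice_prod:
  assumes "U \<subseteq> pts X" "V \<subseteq> pts Y" "inj_on (orbit_r H X) U" "inj_on (orbit_r G Y) V"
  shows "inj_on (orbit_r G (comp_corr H X Y)) (slice_prod H X Y U V)"
proof (rule inj_onI)
  fix z1 z2
  assume z: "z1 \<in> slice_prod H X Y U V" "z2 \<in> slice_prod H X Y U V"
    and orbit_eq: "orbit_r G (comp_corr H X Y) z1 = orbit_r G (comp_corr H X Y) z2"
  obtain x1 y1 where xy1: "x1 \<in> U" "y1 \<in> V" "(x1, y1) \<in> fib_prod X Y" "z1 = cls H X Y x1 y1"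
    using z(1) assms(1,2) by (rule slice_prodE)
  obtain x2 y2 where xy2: "x2 \<in> U" "y2 \<in> V" "(x2, y2) \<in> fib_prod X Y" "z2 = cls H X Y x2 y2"
    using z(2) assms(1,2) by (rule slice_prodE)
  have "z1 \<in> orbit_r G (comp_corr H X Y) z1"
    using xy1 Y.ract_cs[of y1] by (auto simp: orbit_r_comp_corr_cls intro!: exI[of _ "cs Y y1"])
  then obtain g where g: "g \<in> arr G" "rng G g = cs Y y2" "cls H X Y x1 y1 = cls H X Y x2 (ract Y y2 g)"
    using orbit_eq xy1(4) xy2 by (auto simp: orbit_r_comp_corr_cls)
  then have "x1 = x2 \<and> y1 = ract Y y2 g"
    using xy1(1-3) xy2(1,3) by (intro slice_cls_eqD[OF assms(3)]) auto
  moreover have "orbit_r G Y (ract Y y2 g) = orbit_r G Y y2"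
    using xy2(3) g by (intro Y.orbit_r_ract) auto
  ultimately have "x1 = x2" "y1 = y2"
    using assms(4) xy1(2) xy2(2) by (auto dest: inj_onD)
  then show "z1 = z2"
    using xy1(4) xy2(4) by simp
qed

lemma translate_mem_slice_prod:
  assumes xy: "(x, y) \<in> fib_prod X Y" and "k \<in> arr H" "rng H k = cs X x"
    and shifted: "ract X x k \<in> U" "lact Y (ginv H k) y \<in> V"
  shows "cls H X Y x y \<in> slice_prod H X Y U V"
proof -
  have shift: "(ract X x k, lact Y (ginv H k) y) \<in> cls H X Y x y"
    using assms by (intro ract_lact_mem_cls)
  show ?thesis
    using cls_eq_if_mem[OF xy shift] mem_cls_fib_prod[OF xy shift] shifted
    unfolding slice_prod_def by auto
qed

lemma slice_prod_translateE:
  assumes "(a, b) \<in> fib_prod X Y" "cls H X Y a b \<in> slice_prod H X Y U V" "U \<subseteq> pts X" "V \<subseteq> pts Y"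
  obtains k where "k \<in> arr H" "rng H k = cs X a" "ract X a k \<in> U" "lact Y (ginv H k) b \<in> V"
proof -
  obtain x y where xy: "x \<in> U" "y \<in> V" "(x, y) \<in> fib_prod X Y" "cls H X Y a b = cls H X Y x y"
    using assms(2-4) by (rule slice_prodE) simp
  have "(a, b) \<in> cls H X Y x y"
    using cls_self[OF assms(1)] xy(4) by simp
  then obtain h where h: "h \<in> arr H" "src H h = cs X x" "a = ract X x (ginv H h)" "b = lact Y h y"
    by (rule mem_clsE)
  then show thesis
    using that[of h] xy X.ract_ract_ginv[of x "ginv H h"] by simp
qed

(* The neighbourhood is the preimage of U x V under the continuous, class-preserving
   translation (a', b') |-> (a' k', k'^-1 b'), where k' is lifted continuously from s(a'). *)
lemma slice_prod_nhd:
  assumes U: "openin (ctop X) U" and V: "openin (ctop Y) V"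
    and ab: "(a, b) \<in> fib_prod X Y" and k: "k \<in> arr H" "rng H k = cs X a"
    and "ract X a k \<in> U" "lact Y (ginv H k) b \<in> V"
  obtains W where "openin (fib_top X Y) W" "(a, b) \<in> W"
    "\<And>x y. (x, y) \<in> W \<Longrightarrow> cls H X Y x y \<in> slice_prod H X Y U V"
proof -
  obtain N \<kappa> where N: "openin (ctop X) N" "a \<in> N"
    and \<kappa>: "continuous_map (subtopology (ctop X) N) (gtop H) \<kappa>"
      "\<And>x. x \<in> N \<Longrightarrow> \<kappa> x \<in> arr H \<and> rng H (\<kappa> x) = cs X x" "\<kappa> a = k"
    using X.local_arrow_lift[of a k] ab k by auto
  define D where "D = {p \<in> fib_prod X Y. fst p \<in> N}"
  define T where "T = subtopology (fib_top X Y) D"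
  have D: "openin (fib_top X Y) D"
    using openin_continuous_map_preimage[OF continuous_map_fst_fib_top N(1)] by (simp add: D_def)
  have top_T: "topspace T = D"
    by (auto simp: T_def D_def)
  have fst_T: "continuous_map T (ctop X) fst"
    unfolding T_def by (rule continuous_map_from_subtopology[OF continuous_map_fst_fib_top])
  have snd_T: "continuous_map T (ctop Y) snd"
    unfolding T_def by (rule continuous_map_from_subtopology[OF continuous_map_snd_fib_top])
  have "continuous_map T (subtopology (ctop X) N) fst"
    using fst_T top_T by (auto simp: D_def continuous_map_in_subtopology)
  then have \<kappa>_fst: "continuous_map T (gtop H) (\<kappa> \<circ> fst)"
    using \<kappa>(1) by (rule continuous_map_compose)
  have shift_X: "continuous_map T (ctop X) (\<lambda>p. ract X (fst p) ((\<kappa> \<circ> fst) p))"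
    by (rule X.continuous_map_ract[OF fst_T \<kappa>_fst]) (use \<kappa>(2) top_T in \<open>auto simp: D_def\<close>)
  have "continuous_map T (gtop H) (ginv H \<circ> (\<kappa> \<circ> fst))"
    using \<kappa>_fst H.continuous_map_ginv by (rule continuous_map_compose)
  then have shift_Y: "continuous_map T (ctop Y) (\<lambda>p. lact Y ((ginv H \<circ> (\<kappa> \<circ> fst)) p) (snd p))"
    by (rule Y.continuous_map_lact[OF _ snd_T]) (use \<kappa>(2) top_T in \<open>auto simp: D_def\<close>)
  define W where "W = {p \<in> topspace T. ract X (fst p) (\<kappa> (fst p)) \<in> U}
    \<inter> {p \<in> topspace T. lact Y (ginv H (\<kappa> (fst p))) (snd p) \<in> V}"
  have "openin T W"
    unfolding W_def using openin_continuous_map_preimage[OF shift_X U] openin_continuous_map_preimage[OF shift_Y V]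
    by (auto intro: openin_Int)
  then have "openin (fib_top X Y) W"
    using D unfolding T_def by (rule openin_trans_full)
  moreover have "(a, b) \<in> W"
    using assms N(2) \<kappa>(3) by (simp add: W_def top_T D_def)
  moreover have "cls H X Y x y \<in> slice_prod H X Y U V" if "(x, y) \<in> W" for x y
    using that \<kappa>(2) by (intro translate_mem_slice_prod) (auto simp: W_def top_T D_def)
  ultimately show thesis
    using that by blast
qed

lemma openin_slice_prod:
  assumes U: "openin (ctop X) U" and V: "openin (ctop Y) V"
  shows "openin (ctop (comp_corr H X Y)) (slice_prod H X Y U V)"
proof -
  have UV: "U \<subseteq> pts X" "V \<subseteq> pts Y"
    using U V by (auto simp: pts_def dest: openin_subset)
  have "slice_prod H X Y U V \<subseteq> (\<lambda>(x, y). cls H X Y x y) ` topspace (fib_top X Y)"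
  proof
    fix z assume "z \<in> slice_prod H X Y U V"
    then obtain x y where "x \<in> U" "y \<in> V" "(x, y) \<in> fib_prod X Y" "z = cls H X Y x y"
      using UV by (rule slice_prodE)
    then show "z \<in> (\<lambda>(x, y). cls H X Y x y) ` topspace (fib_top X Y)"
      by (intro image_eqI[of _ _ "(x, y)"]) simp_all
  qed
  moreover have "openin (fib_top X Y)
      {p \<in> topspace (fib_top X Y). (\<lambda>(x, y). cls H X Y x y) p \<in> slice_prod H X Y U V}"
  proof (subst openin_subopen, safe)
    fix a b assume ab: "(a, b) \<in> topspace (fib_top X Y)" "cls H X Y a b \<in> slice_prod H X Y U V"
    then have ab_fib: "(a, b) \<in> fib_prod X Y"
      by simp
    then obtain k where "k \<in> arr H" "rng H k = cs X a" "ract X a k \<in> U" "lact Y (ginv H k) b \<in> V"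
      using ab(2) UV by (rule slice_prod_translateE)
    then obtain W where W: "openin (fib_top X Y) W" "(a, b) \<in> W"
        "\<And>x y. (x, y) \<in> W \<Longrightarrow> cls H X Y x y \<in> slice_prod H X Y U V"
      using slice_prod_nhd[OF U V ab_fib] by blast
    have "W \<subseteq> {p \<in> topspace (fib_top X Y). (\<lambda>(x, y). cls H X Y x y) p \<in> slice_prod H X Y U V}"
      using openin_subset[OF W(1)] W(3) by auto
    with W(1,2) show "\<exists>W. openin (fib_top X Y) W \<and> (a, b) \<in> W
        \<and> W \<subseteq> {p \<in> topspace (fib_top X Y). (\<lambda>(x, y). cls H X Y x y) p \<in> slice_prod H X Y U V}"
      by blast
  qed
  ultimately show ?thesis
    by (simp add: ctop_comp_corr openin_quot_top)
qed

lemma slice_slice_prod: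
  assumes "slice H X U" "slice G Y V"
  shows "slice G (comp_corr H X Y) (slice_prod H X Y U V)"
  using assms slice_subset_pts[OF assms(1)] slice_subset_pts[OF assms(2)]
  by (simp add: slice_def openin_slice_prod inj_on_cs_slice_prod inj_on_orbit_slice_prod)

end

theorem lemma7p11:
  fixes K :: "'k grpd" and H :: "'h grpd" and G :: "'g grpd"
    and X :: "('x, 'k, 'h) corr" and Y :: "('y, 'h, 'g) corr"
    and U :: "'x set" and V :: "'y set"
  assumes "etale_groupoid K" and "etale_groupoid H" and "etale_groupoid G"
    and "is_corr K H X" and "is_corr H G Y"
    and "slice H X U" and "slice G Y V"
  shows "slice G (comp_corr H X Y) (slice_prod H X Y U V) \<and>
         (\<forall>z \<in> slice_prod H X Y U V. \<exists>!(x, y). x \<in> U \<and> y \<in> V \<and> cs X x = cr Y y \<and> z = cls H X Y x y)"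
proof -
  interpret corr_comp K H G X Y
    using assms(1-5) by (simp add: corr_comp_def groupoid_corr_def groupoid_corr_axioms_def etale_grpd_def)
  show ?thesis
    using slice_slice_prod[OF assms(6,7)] assms(6)
      slice_prod_unique_rep[OF slice_subset_pts[OF assms(6)] slice_subset_pts[OF assms(7)]]
    by (simp add: slice_def)
qed

end
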